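(* Consider the following model. Particles occupy distinct nodes of the infinite regular triangular grid $G_\Delta$; the set of occupied nodes is connected and may contain holes (i.e., it need not be simply connected). Particles are anonymous, start in identical states, run the same deterministic algorithm, have constant memory and cannot move. Each particle has six ports, labelled $0,\dots,5$, one for each grid edge incident to its node, such that port $0$ leads to the East neighbour and port $3$ to the West neighbour for every particle (common direction), and ports $i$ and $i+1 \bmod 6$ lead to adjacent grid nodes; the circular orientation of the remaining labels (clockwise or counterclockwise) may differ from particle to particle (no common chirality). Particles communicate only by exchanging messages with particles at adjacent nodes, and both sender and receiver know the local port through which a message is sent/received. Then there is no terminating algorithm (one in which, after finitely many steps, every particle has irrevocably entered a final state, exactly one particle being in the final state leader) that solves Leader Election in every such configuration under a fair synchronous scheduler.
   Context: A fair synchronous scheduler activates all particles simultaneously in every step. In the triangular grid, the six neighbours of a node are in the directions East, West, North East, North West, South East and South West. Leader Election means that eventually exactly one particle is in the state leader. *)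

theory Defs
  imports Main
begin

text \<open>Nodes in axial coordinates. The six directions, in counterclockwise order:
  0 = East (1,0), 1 = North East (0,1), 2 = North West (-1,1),
  3 = West (-1,0), 4 = South West (0,-1), 5 = South East (1,-1).
  Consecutive directions (mod 6) lead to adjacent grid nodes.\<close>

type_synonym node = "int \<times> int"

definition dir_vec :: "nat \<Rightarrow> int \<times> int" where
  "dir_vec d = (case d mod 6 of
      0 \<Rightarrow> (1, 0) | Suc 0 \<Rightarrow> (0, 1) | Suc (Suc 0) \<Rightarrow> (-1, 1)
    | Suc (Suc (Suc 0)) \<Rightarrow> (-1, 0) | Suc (Suc (Suc (Suc 0))) \<Rightarrow> (0, -1)
    | _ \<Rightarrow> (1, -1))"

definition nb :: "node \<Rightarrow> nat \<Rightarrow> node" where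
  "nb v d = (fst v + fst (dir_vec d), snd v + snd (dir_vec d))"

definition grid_adj :: "node \<Rightarrow> node \<Rightarrow> bool" where
  "grid_adj u v \<longleftrightarrow> (\<exists>d<6. v = nb u d)"

definition grid_connected :: "node set \<Rightarrow> bool" where
  "grid_connected S \<longleftrightarrow>
     (\<forall>u\<in>S. \<forall>v\<in>S. (u, v) \<in> (Restr {(a, b). grid_adj a b} S)\<^sup>*)"

text \<open>Each particle has a chirality flag: True = counterclockwise labelling,
  False = clockwise labelling. Port 0 always leads East, port 3 always West.\<close>

definition port_dir :: "bool \<Rightarrow> nat \<Rightarrow> nat" where
  "port_dir ccw p = (if ccw then p mod 6 else (6 - p mod 6) mod 6)"

text \<open>The port of a particle with given chirality that leads in direction d
  (inverse of port_dir; the formula coincides).\<close>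

definition dir_port :: "bool \<Rightarrow> nat \<Rightarrow> nat" where
  "dir_port ccw d = (if ccw then d mod 6 else (6 - d mod 6) mod 6)"

text \<open>A deterministic anonymous algorithm: every particle starts in state init;
  in every round a particle in state q sends message send q p through each port p,
  then changes state depending on its state and on what it received through each port
  (None: no particle at that port).\<close>

record ('q, 'm) algorithm =
  init :: 'q
  send :: "'q \<Rightarrow> nat \<Rightarrow> 'm"
  trans :: "'q \<Rightarrow> (nat \<Rightarrow> 'm option) \<Rightarrow> 'q"
  final :: "'q set"
  leader :: 'q

definition terminating_alg :: "('q, 'm, 'z) algorithm_scheme \<Rightarrow> bool" where
  "terminating_alg A \<longleftrightarrow> leader A \<in> final A \<and>
     (\<forall>q\<in>final A. \<forall>inp. trans A q inp = q)"

text \<open>Execution under the fair synchronous scheduler (all particles are activated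
  in every step) on the configuration with occupied set S and chirality chi.\<close>

fun run :: "('q, 'm, 'z) algorithm_scheme \<Rightarrow> node set \<Rightarrow> (node \<Rightarrow> bool) \<Rightarrow> nat \<Rightarrow> node \<Rightarrow> 'q" where
  "run A S chi 0 = (\<lambda>v. init A)"
| "run A S chi (Suc t) = (\<lambda>v. trans A (run A S chi t v)
     (\<lambda>p. let d = port_dir (chi v) p; w = nb v d in
          if p < 6 \<and> w \<in> S
          then Some (send A (run A S chi t w) (dir_port (chi w) ((d + 3) mod 6)))
          else None))"

definition elected_at :: "('q, 'm, 'z) algorithm_scheme \<Rightarrow> node set \<Rightarrow> (node \<Rightarrow> bool) \<Rightarrow> nat \<Rightarrow> bool" where
  "elected_at A S chi t \<longleftrightarrow>
     (\<forall>v\<in>S. run A S chi t v \<in> final A) \<and>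
     card {v\<in>S. run A S chi t v = leader A} = 1"

definition solves_LE :: "('q, 'm, 'z) algorithm_scheme \<Rightarrow> bool" where
  "solves_LE A \<longleftrightarrow>
     (\<forall>S chi. finite S \<and> S \<noteq> {} \<and> grid_connected S \<longrightarrow> (\<exists>t. elected_at A S chi t))"

end

theory Submission
  imports Defs
begin

text \<open>Particles only ever learn which of their ports lead to particles and what arrives
  there. Six counterclockwise particles around a hole form a ring in which the particle
  numbered k sees its successor behind port 5 - k mod 6 and its predecessor behind port
  (9 - k mod 6) mod 6. A zigzag path in which the chirality flips every three particles
  reproduces exactly this port pattern at every interior particle, so by induction on time
  path particle k is in the state of ring particle k mod 6 as long as it is at least t steps
  away from both ends of the path. If the ring elects particle r at time T, then on a path
  of length 12 (T + 1) the particles r + 6 T and r + 6 (T + 1) are both leaders at time T;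
  final states being absorbing, the path never has exactly one leader.\<close>

lemma mod6_cases:
  fixes k :: nat
  obtains "k mod 6 = 0" | "k mod 6 = 1" | "k mod 6 = 2" | "k mod 6 = 3" | "k mod 6 = 4" | "k mod 6 = 5"
  by linarith

lemma port_dir_lt: "port_dir c p < 6"
  by (simp add: port_dir_def)

lemma dir_port_port_dir: "p < 6 \<Longrightarrow> dir_port c (port_dir c p) = p"
  by (cases p rule: mod6_cases) (auto simp: port_dir_def dir_port_def)

lemma nb_opposite: "nb (nb v d) ((d + 3) mod 6) = v"
proof -
  have "(d + 3) mod 6 = (d mod 6 + 3) mod 6" by (simp add: mod_simps)
  then show ?thesis
    by (cases d rule: mod6_cases) (simp_all add: nb_def dir_vec_def)
qed

lemma nb_opposite_unique:
  assumes "d' < 6" "nb (nb v d) d' = v"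
  shows "d' = (d + 3) mod 6"
proof -
  have "(d + 3) mod 6 = (d mod 6 + 3) mod 6" by (simp add: mod_simps)
  then show ?thesis using assms
    by (cases d rule: mod6_cases; cases d' rule: mod6_cases) (simp_all add: nb_def dir_vec_def prod_eq_iff)
qed

lemma grid_adj_sym: "grid_adj u v \<Longrightarrow> grid_adj v u"
  unfolding grid_adj_def by (metis nb_opposite mod_less_divisor zero_less_numeral)

lemma grid_connected_chain:
  assumes "\<And>k. Suc k < n \<Longrightarrow> grid_adj (g k) (g (Suc k))"
  shows "grid_connected (g ` {..<n})"
proof -
  let ?R = "Restr {(a, b). grid_adj a b} (g ` {..<n})"
  have linked: "(g 0, g k) \<in> ?R\<^sup>* \<and> (g k, g 0) \<in> ?R\<^sup>*" if "k < n" for k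
    using that
  proof (induction k)
    case (Suc k)
    then have "(g k, g (Suc k)) \<in> ?R" "(g (Suc k), g k) \<in> ?R"
      using assms grid_adj_sym by auto
    moreover have "(g 0, g k) \<in> ?R\<^sup>*" "(g k, g 0) \<in> ?R\<^sup>*"
      using Suc by simp_all
    ultimately show ?case
      by (blast intro: rtrancl_into_rtrancl converse_rtrancl_into_rtrancl)
  qed simp
  show ?thesis
    unfolding grid_connected_def
  proof (intro ballI)
    fix u v
    assume "u \<in> g ` {..<n}" "v \<in> g ` {..<n}"
    then obtain i j where "i < n" "j < n" "u = g i" "v = g j"
      by blast
    then show "(u, v) \<in> ?R\<^sup>*"
      using linked by (blast intro: rtrancl_trans)
  qed
qed

definition port_neighbour :: "(node \<Rightarrow> bool) \<Rightarrow> node \<Rightarrow> nat \<Rightarrow> node" where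
  "port_neighbour chi v p = nb v (port_dir (chi v) p)"

lemma grid_adj_port_neighbour: "grid_adj v (port_neighbour chi v p)"
  unfolding grid_adj_def port_neighbour_def using port_dir_lt by blast

definition port_target :: "node set \<Rightarrow> (node \<Rightarrow> bool) \<Rightarrow> node \<Rightarrow> nat \<Rightarrow> (node \<times> nat) option" where
  "port_target S chi v p = (let d = port_dir (chi v) p; w = nb v d in
     if p < 6 \<and> w \<in> S then Some (w, dir_port (chi w) ((d + 3) mod 6)) else None)"

lemma run_Suc_port_target:
  "run A S chi (Suc t) v = trans A (run A S chi t v)
     (\<lambda>p. map_option (\<lambda>(w, q). send A (run A S chi t w) q) (port_target S chi v p))"
  unfolding run.simps port_target_def Let_def
  by (rule arg_cong[where f = "trans A _"]) (simp add: fun_eq_iff)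

lemma port_target_eq_Some:
  assumes "p < 6" "q < 6" "w \<in> S"
    and "port_neighbour chi v p = w" "port_neighbour chi w q = v"
  shows "port_target S chi v p = Some (w, q)"
proof -
  let ?d = "port_dir (chi v) p"
  have "port_dir (chi w) q = (?d + 3) mod 6"
    using assms(4,5) port_dir_lt nb_opposite_unique unfolding port_neighbour_def by metis
  then have "dir_port (chi w) ((?d + 3) mod 6) = q"
    using dir_port_port_dir[OF assms(2), of "chi w"] by simp
  then show ?thesis
    using assms(1,3,4) by (simp add: port_target_def port_neighbour_def Let_def)
qed

lemma port_target_eq_None:
  "\<not> (p < 6 \<and> port_neighbour chi v p \<in> S) \<Longrightarrow> port_target S chi v p = None"
  by (simp add: port_target_def port_neighbour_def Let_def)

lemma run_eq_if_port_bisimilar: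
  fixes R :: "nat \<Rightarrow> (node \<times> node) set"
  assumes anti: "\<And>t. R (Suc t) \<subseteq> R t"
    and bisim: "\<And>t v v' p. (v, v') \<in> R (Suc t) \<Longrightarrow>
      rel_option (\<lambda>(w, q) (w', q'). (w, w') \<in> R t \<and> q = q')
        (port_target S chi v p) (port_target S' chi' v' p)"
  shows "(v, v') \<in> R t \<Longrightarrow> run A S chi t v = run A S' chi' t v'"
proof (induction t arbitrary: v v')
  case (Suc t)
  have "map_option (\<lambda>(w, q). send A (run A S chi t w) q) (port_target S chi v p) =
        map_option (\<lambda>(w, q). send A (run A S' chi' t w) q) (port_target S' chi' v' p)" for p
    using bisim[OF Suc.prems, of p] Suc.IH
    by (cases "port_target S chi v p"; cases "port_target S' chi' v' p") auto
  moreover have "run A S chi t v = run A S' chi' t v'"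
    using Suc anti by blast
  ultimately show ?case
    by (simp only: run_Suc_port_target)
qed simp

lemma run_final_stable:
  assumes "terminating_alg A" "run A S chi t v \<in> final A" "t \<le> t'"
  shows "run A S chi t' v = run A S chi t v"
  using assms(3)
proof (induction t' rule: dec_induct)
  case (step t')
  with assms(1,2) show ?case
    by (simp add: terminating_alg_def)
qed simp

lemma elected_at_mono:
  assumes "terminating_alg A" "elected_at A S chi t" "t \<le> t'"
  shows "elected_at A S chi t'"
proof -
  have same: "\<forall>v\<in>S. run A S chi t' v = run A S chi t v"
    using run_final_stable[OF assms(1) _ assms(3)] assms(2) unfolding elected_at_def by simp
  then have "{v \<in> S. run A S chi t' v = leader A} = {v \<in> S. run A S chi t v = leader A}"
    by auto
  with assms(2) same show ?thesis
    unfolding elected_at_def by simp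
qed

lemma elected_at_obtains_leader:
  assumes "elected_at A S chi t"
  obtains v where "v \<in> S" "run A S chi t v = leader A"
  using assms unfolding elected_at_def by (metis (mono_tags, lifting) card_1_singletonE mem_Collect_eq singletonI)

lemma not_elected_if_two_leaders:
  assumes "terminating_alg A" "u \<in> S" "u' \<in> S" "u \<noteq> u'"
    and "run A S chi t u = leader A" "run A S chi t u' = leader A"
  shows "\<not> elected_at A S chi t'"
proof
  assume "elected_at A S chi t'"
  then have "elected_at A S chi (max t t')"
    by (rule elected_at_mono[OF assms(1)]) simp
  then obtain x where x: "{v \<in> S. run A S chi (max t t') v = leader A} = {x}"
    unfolding elected_at_def by (meson card_1_singletonE)
  have "leader A \<in> final A"
    using assms(1) by (simp add: terminating_alg_def)
  then have "run A S chi (max t t') v = leader A" if "run A S chi t v = leader A" for v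
    using run_final_stable[OF assms(1), of S chi t v "max t t'"] that by simp
  then have "u \<in> {v \<in> S. run A S chi (max t t') v = leader A}"
    and "u' \<in> {v \<in> S. run A S chi (max t t') v = leader A}"
    using assms(2,3,5,6) by simp_all
  with x assms(4) show False
    by simp
qed

definition succ_port :: "nat \<Rightarrow> nat" where
  "succ_port k = 5 - k mod 6"

definition pred_port :: "nat \<Rightarrow> nat" where
  "pred_port k = (9 - k mod 6) mod 6"

lemma succ_port_lt: "succ_port k < 6"
  by (simp add: succ_port_def)

lemma pred_port_lt: "pred_port k < 6"
  by (simp add: pred_port_def)

lemma succ_port_neq_pred_port: "succ_port k \<noteq> pred_port k"
  by (cases k rule: mod6_cases) (simp_all add: succ_port_def pred_port_def)

definition chain_target :: "(nat \<Rightarrow> node) \<Rightarrow> nat \<Rightarrow> nat \<Rightarrow> (node \<times> nat) option" where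
  "chain_target g k p =
     (if p = succ_port k then Some (g (Suc k), pred_port (Suc k))
      else if p = pred_port k then Some (g (k - 1), succ_port (k - 1))
      else None)"

lemma port_target_chain:
  assumes succ: "\<And>j. port_neighbour chi (g j) (succ_port j) = g (Suc j)"
    and pred: "\<And>j. port_neighbour chi (g (Suc j)) (pred_port (Suc j)) = g j"
    and induced: "\<And>p. p < 6 \<Longrightarrow> port_neighbour chi (g k) p \<in> S \<Longrightarrow> p = succ_port k \<or> p = pred_port k"
    and "0 < k" "g (k - 1) \<in> S" "g (Suc k) \<in> S"
  shows "port_target S chi (g k) p = chain_target g k p"
proof -
  have k: "Suc (k - 1) = k"
    using \<open>0 < k\<close> by simp
  consider "p = succ_port k" | "p = pred_port k" | "p \<noteq> succ_port k" "p \<noteq> pred_port k"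
    by blast
  then show ?thesis
  proof cases
    case 1
    then show ?thesis
      using port_target_eq_Some[OF succ_port_lt pred_port_lt \<open>g (Suc k) \<in> S\<close> succ pred]
      by (simp add: chain_target_def)
  next
    case 2
    have "port_neighbour chi (g k) (pred_port k) = g (k - 1)"
      and "port_neighbour chi (g (k - 1)) (succ_port (k - 1)) = g k"
      using pred[of "k - 1"] succ[of "k - 1"] by (simp_all only: k)
    then have "port_target S chi (g k) (pred_port k) = Some (g (k - 1), succ_port (k - 1))"
      by (rule port_target_eq_Some[OF pred_port_lt succ_port_lt \<open>g (k - 1) \<in> S\<close>])
    with 2 show ?thesis
      using succ_port_neq_pred_port[of k] by (auto simp: chain_target_def)
  next
    case 3
    then have "port_target S chi (g k) p = None"
      using induced by (blast intro: port_target_eq_None)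
    with 3 show ?thesis
      by (simp add: chain_target_def)
  qed
qed

text \<open>As dir_vec (d + 2) + dir_vec d = dir_vec (d + 1), the successor of the ring node in
  direction succ_port k + 2 from the hole at the origin lies behind port succ_port k.\<close>

definition ring_node :: "nat \<Rightarrow> node" where
  "ring_node k = dir_vec (succ_port k + 2)"

definition ring :: "node set" where
  "ring = ring_node ` {..<6}"

lemma ring_eq: "ring = {(1, 0), (0, 1), (-1, 1), (-1, 0), (0, -1), (1, -1)}"
proof -
  have "{..<6::nat} = {0, 1, 2, 3, 4, 5}"
    by auto
  then show ?thesis
    by (auto simp: ring_def ring_node_def succ_port_def dir_vec_def)
qed

lemma ring_node_in_ring: "ring_node k \<in> ring"
proof -
  have "ring_node k = ring_node (k mod 6)"
    by (simp add: ring_node_def succ_port_def)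
  then show ?thesis
    by (simp add: ring_def)
qed

lemma ring_node_add_period: "ring_node (k + 6 * m) = ring_node k"
  by (simp add: ring_node_def succ_port_def)

lemma ring_succ: "port_neighbour (\<lambda>_. True) (ring_node j) (succ_port j) = ring_node (Suc j)"
  by (cases j rule: mod6_cases)
    (simp_all add: port_neighbour_def ring_node_def succ_port_def port_dir_def nb_def dir_vec_def mod_Suc)

lemma ring_pred: "port_neighbour (\<lambda>_. True) (ring_node (Suc j)) (pred_port (Suc j)) = ring_node j"
  by (cases j rule: mod6_cases)
    (simp_all add: port_neighbour_def ring_node_def succ_port_def pred_port_def port_dir_def nb_def dir_vec_def mod_Suc)

lemma ring_induced:
  assumes "p < 6" "port_neighbour (\<lambda>_. True) (ring_node k) p \<in> ring"
  shows "p = succ_port k \<or> p = pred_port k"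
  using assms
  by (cases k rule: mod6_cases; cases p rule: mod6_cases)
    (simp_all add: ring_eq port_neighbour_def ring_node_def succ_port_def pred_port_def port_dir_def nb_def dir_vec_def)

lemma port_target_ring:
  "0 < k \<Longrightarrow> port_target ring (\<lambda>_. True) (ring_node k) p = chain_target ring_node k p"
  by (rule port_target_chain[OF ring_succ ring_pred ring_induced]) (simp_all add: ring_node_in_ring)

lemma grid_connected_ring: "grid_connected ring"
  unfolding ring_def
  by (rule grid_connected_chain) (metis ring_succ grid_adj_port_neighbour)

text \<open>Since 2 x + y is
  invariant under the translation, path_chirality makes the first three particles of each
  period clockwise and the last three counterclockwise.\<close>

definition path_block :: "node list" where
  "path_block = [(0, 0), (0, 1), (-1, 2), (-2, 2), (-3, 3), (-3, 4)]"

definition path_node :: "nat \<Rightarrow> node" where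
  "path_node k = (fst (path_block ! (k mod 6)) - 2 * int (k div 6),
                  snd (path_block ! (k mod 6)) + 4 * int (k div 6))"

definition path_chirality :: "node \<Rightarrow> bool" where
  "path_chirality v \<longleftrightarrow> 2 * fst v + snd v < 0"

lemma path_node_add_period:
  "path_node (k + 6 * m) = (fst (path_node k) - 2 * int m, snd (path_node k) + 4 * int m)"
  by (simp add: path_node_def)

lemma path_chirality_path_node: "path_chirality (path_node k) \<longleftrightarrow> 3 \<le> k mod 6"
  by (cases k rule: mod6_cases) (simp_all add: path_chirality_def path_node_def path_block_def)

lemma path_succ: "port_neighbour path_chirality (path_node j) (succ_port j) = path_node (Suc j)"
  by (cases j rule: mod6_cases)
    (simp_all add: port_neighbour_def path_chirality_def succ_port_def port_dir_def
      nb_def dir_vec_def path_node_def path_block_def mod_Suc div_Suc)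

lemma path_pred:
  "port_neighbour path_chirality (path_node (Suc j)) (pred_port (Suc j)) = path_node j"
  by (cases j rule: mod6_cases)
    (simp_all add: port_neighbour_def path_chirality_def pred_port_def port_dir_def
      nb_def dir_vec_def path_node_def path_block_def mod_Suc div_Suc)

lemma path_induced:
  assumes "p < 6" "port_neighbour path_chirality (path_node k) p = path_node k'"
  shows "p = succ_port k \<or> p = pred_port k"
proof -
  let ?d = "port_dir (3 \<le> k mod 6) p"
  let ?a = "fst (path_block ! (k mod 6)) + fst (dir_vec ?d) - fst (path_block ! (k' mod 6))"
  let ?b = "snd (path_block ! (k mod 6)) + snd (dir_vec ?d) - snd (path_block ! (k' mod 6))"
  have "nb (path_node k) ?d = path_node k'"
    using assms(2) by (simp add: port_neighbour_def path_chirality_path_node)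
  then have "?a = - 2 * (int (k' div 6) - int (k div 6))" "?b = 4 * (int (k' div 6) - int (k div 6))"
    by (simp_all add: nb_def path_node_def prod_eq_iff)
  then have "?b + 2 * ?a = 0" "?a mod 2 = 0"
    by simp_all
  then show ?thesis
    using assms(1)
    by (cases k rule: mod6_cases; cases k' rule: mod6_cases; cases p rule: mod6_cases)
      (simp_all add: succ_port_def pred_port_def port_dir_def dir_vec_def path_block_def)
qed

lemma grid_connected_path: "grid_connected (path_node ` {..<N})"
  by (rule grid_connected_chain) (metis path_succ grid_adj_port_neighbour)

lemma port_target_path:
  assumes "0 < k" "Suc k < N"
  shows "port_target (path_node ` {..<N}) path_chirality (path_node k) p = chain_target path_node k p"
  using assms by (intro port_target_chain[OF path_succ path_pred]) (auto dest: path_induced)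

lemma run_path_eq_run_ring:
  assumes "t \<le> k" "k + t < N"
  shows "run A (path_node ` {..<N}) path_chirality t (path_node k) = run A ring (\<lambda>_. True) t (ring_node k)"
proof -
  define R where "R t = {(path_node k, ring_node k) | k. t \<le> k \<and> k + t < N}" for t
  have "R (Suc t) \<subseteq> R t" for t
    by (fastforce simp: R_def)
  moreover have "rel_option (\<lambda>(w, q) (w', q'). (w, w') \<in> R t \<and> q = q')
      (port_target (path_node ` {..<N}) path_chirality v p) (port_target ring (\<lambda>_. True) v' p)"
    if related: "(v, v') \<in> R (Suc t)" for t v v' p
  proof -
    obtain k where k: "v = path_node k" "v' = ring_node k" "Suc t \<le> k" "k + Suc t < N"
      using related unfolding R_def by auto
    then have "(path_node (Suc k), ring_node (Suc k)) \<in> R t"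
      and "(path_node (k - 1), ring_node (k - 1)) \<in> R t"
      unfolding R_def by (fastforce, force)
    with k show ?thesis
      by (simp add: port_target_path port_target_ring chain_target_def)
  qed
  moreover have "(path_node k, ring_node k) \<in> R t"
    using assms by (auto simp: R_def)
  ultimately show ?thesis
    by (rule run_eq_if_port_bisimilar)
qed

theorem theorem1:
  fixes A :: "('q::finite, 'm) algorithm"
  assumes "terminating_alg A"
  shows "\<not> solves_LE A"
proof
  assume solves: "solves_LE A"
  have "finite ring" "ring \<noteq> {}"
    by (simp_all add: ring_def lessThan_empty_iff)
  then obtain T where "elected_at A ring (\<lambda>_. True) T"
    using solves grid_connected_ring unfolding solves_LE_def by blast
  then obtain r where "r < 6" and ring_leader: "run A ring (\<lambda>_. True) T (ring_node r) = leader A"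
    unfolding ring_def by (elim elected_at_obtains_leader) blast
  \<comment> \<open>long enough that both copies of r are at least T steps from the ends\<close>
  define N where "N = 12 * (T + 1)"
  define P where "P = path_node ` {..<N}"
  define u where "u = path_node (r + 6 * T)"
  define u' where "u' = path_node (r + 6 * (T + 1))"
  have "u \<noteq> u'"
    using path_node_add_period[of "r + 6 * T" 1] by (simp add: u_def u'_def algebra_simps prod_eq_iff)
  moreover have "u \<in> P" "u' \<in> P"
    using \<open>r < 6\<close> by (auto simp: u_def u'_def P_def N_def)
  moreover have "run A P path_chirality T u = leader A" "run A P path_chirality T u' = leader A"
    using run_path_eq_run_ring[of T _ N A] ring_leader \<open>r < 6\<close>
      ring_node_add_period[of r T] ring_node_add_period[of r "T + 1"]
    by (simp_all add: u_def u'_def P_def N_def)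
  ultimately have "\<not> elected_at A P path_chirality t" for t
    using not_elected_if_two_leaders[OF assms] by blast
  moreover have "finite P" "P \<noteq> {}" "grid_connected P"
    using grid_connected_path by (simp_all add: P_def N_def lessThan_empty_iff)
  ultimately show False
    using solves unfolding solves_LE_def by blast
qed

end
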